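(* Let $G_1,G_2$ be regular (finite, simple, undirected) graphs and let $G$ be a graph (without loops, unweighted, possibly directed) with $2$ vertices. Then \[ E(G[G_1,G_2])\ge E(G)+E(G_1)+E(G_2). \]
   Context: The energy $E(H)$ of a (di)graph $H$ is the sum of the absolute values of the eigenvalues (with multiplicity) of its adjacency matrix. For a graph $G$ on vertices $v_1,v_2$ with adjacency matrix $(a_{ij})$, the joined union $G[G_1,G_2]$ has adjacency matrix $\begin{pmatrix} A_1 & a_{12}\mathbf 1\\ a_{21}\mathbf 1 & A_2\end{pmatrix}$, where $A_i$ is the adjacency matrix of $G_i$ and $a_{ij}\mathbf 1$ is the all-$a_{ij}$ matrix of appropriate size; i.e. every vertex of $G_i$ is joined to every vertex of $G_j$ whenever $v_i$ is adjacent to $v_j$ in $G$. *)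

theory Defs
  imports "Jordan_Normal_Form.Char_Poly" "HOL-Computational_Algebra.Fundamental_Theorem_Algebra"
begin

definition energy :: "real mat \<Rightarrow> real" where
  "energy A = (\<Sum>z\<in># proots (char_poly (map_mat complex_of_real A)). cmod z)"

definition simple_graph_adj :: "nat \<Rightarrow> real mat \<Rightarrow> bool" where
  "simple_graph_adj n A \<longleftrightarrow> n \<ge> 1 \<and> A \<in> carrier_mat n n \<and>
     (\<forall>i<n. \<forall>j<n. A $$ (i,j) \<in> {0,1} \<and> A $$ (i,j) = A $$ (j,i)) \<and>
     (\<forall>i<n. A $$ (i,i) = 0)"

definition regular_graph_adj :: "nat \<Rightarrow> real mat \<Rightarrow> bool" where
  "regular_graph_adj n A \<longleftrightarrow> simple_graph_adj n A \<and>
     (\<exists>r. \<forall>i<n. (\<Sum>j<n. A $$ (i,j)) = r)"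

definition loopless_digraph_adj2 :: "real mat \<Rightarrow> bool" where
  "loopless_digraph_adj2 A \<longleftrightarrow> A \<in> carrier_mat 2 2 \<and>
     A $$ (0,0) = 0 \<and> A $$ (1,1) = 0 \<and> A $$ (0,1) \<in> {0,1} \<and> A $$ (1,0) \<in> {0,1}"

definition joined_union2 :: "real mat \<Rightarrow> real mat \<Rightarrow> real mat \<Rightarrow> real mat" where
  "joined_union2 A A1 A2 = four_block_mat A1 (mat (dim_row A1) (dim_col A2) (\<lambda>_. A $$ (0,1)))
                                          (mat (dim_row A2) (dim_col A1) (\<lambda>_. A $$ (1,0))) A2"

end

theory Submission
  imports Defs
begin

(* Let G_i be r_i-regular on n_i vertices, let a, b be the off-diagonal entries of the
   adjacency matrix of G and M that of G[G1,G2]. Block elimination in x I - M, for x outside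
   {r1, r2}, gives
     chi_M(x) (x - r1) (x - r2) = chi_G1(x) chi_G2(x) ((x - r1) (x - r2) - a b n1 n2),
   so E(G[G1,G2]) + r1 + r2 = E(G1) + E(G2) + |l1| + |l2| with l1, l2 the roots of the
   quadratic; taking G1 = G2 = K1 the same identity gives E(G). If a b = 0 then {l1, l2} =
   {r1, r2} and E(G) = 0. If a b = 1 then E(G) = 2, while |l1| + |l2| >= l1 - l2 =
   sqrt ((r1 - r2)^2 + 4 n1 n2) >= r1 + r2 + 2 because n_i >= r_i + 1. *)

definition constant_row_sum :: "'a :: comm_monoid_add mat \<Rightarrow> 'a \<Rightarrow> bool" where
  "constant_row_sum B d \<longleftrightarrow> (\<forall>i<dim_row B. (\<Sum>j<dim_col B. B $$ (i,j)) = d)"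

lemma mult_const_mat_right:
  fixes B :: "'a :: comm_ring_1 mat"
  assumes B: "B \<in> carrier_mat m n" and d: "constant_row_sum B d"
  shows "B * mat n k (\<lambda>_. c) = mat m k (\<lambda>_. d * c)"
proof (rule eq_matI)
  fix i j assume ij: "i < dim_row (mat m k (\<lambda>_. d * c))" "j < dim_col (mat m k (\<lambda>_. d * c))"
  then have "(B * mat n k (\<lambda>_. c)) $$ (i,j) = (\<Sum>l<n. B $$ (i,l)) * c"
    using B by (auto simp: scalar_prod_def sum_distrib_right atLeast0LessThan)
  also have "\<dots> = d * c" using ij B d by (auto simp: constant_row_sum_def)
  finally show "(B * mat n k (\<lambda>_. c)) $$ (i,j) = mat m k (\<lambda>_. d * c) $$ (i,j)" using ij by simp
qed (use B in auto)

lemma const_mat_mult_const_mat: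
  "mat m n (\<lambda>_. a) * mat n k (\<lambda>_. b) = mat m k (\<lambda>_. of_nat n * (a * b :: 'a :: comm_ring_1))"
  by (rule eq_matI) (auto simp: scalar_prod_def)

lemma add_const_mat: "mat m n (\<lambda>_. a) + mat m n (\<lambda>_. b) = mat m n (\<lambda>_. a + b :: 'a :: plus)"
  by (rule eq_matI) auto

lemma det_add_const_mat:
  fixes B :: "'a :: field mat"
  assumes B: "B \<in> carrier_mat n n" and d: "constant_row_sum B d" "d \<noteq> 0"
  shows "det (B + mat n n (\<lambda>_. s)) = (1 + of_nat n * s / d) * det B"
proof -
  \<comment> \<open>Row operations reduce the bordered matrix K to B plus the all-s matrix, column
    operations (which use the row sums of B) to the blocks 1 + n s / d and B.\<close>
  let ?K = "four_block_mat (1\<^sub>m 1) (mat 1 n (\<lambda>_. 1)) (mat n 1 (\<lambda>_. -s)) B"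
  let ?P = "four_block_mat (1\<^sub>m 1) (0\<^sub>m 1 n) (mat n 1 (\<lambda>_. s)) (1\<^sub>m n)"
  let ?Q = "four_block_mat (1\<^sub>m 1) (0\<^sub>m 1 n) (mat n 1 (\<lambda>_. s/d)) (1\<^sub>m n)"
  have K: "?K \<in> carrier_mat (1+n) (1+n)" using B by auto
  have P: "?P \<in> carrier_mat (1+n) (1+n)" and Q: "?Q \<in> carrier_mat (1+n) (1+n)" by auto
  have "det ?P = 1" and "det ?Q = 1"
    by (subst det_four_block_mat_upper_right_zero[of _ 1 _ n]; simp)+
  then have det_PK: "det (?P * ?K) = det ?K" and det_KQ: "det (?K * ?Q) = det ?K"
    using det_mult[OF P K] det_mult[OF K Q] by simp_all
  have PK: "?P * ?K = four_block_mat (1\<^sub>m 1) (mat 1 n (\<lambda>_. 1)) (0\<^sub>m n 1) (B + mat n n (\<lambda>_. s))"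
    using B by (subst mult_four_block_mat) (auto simp: const_mat_mult_const_mat add_const_mat)
  have KQ: "?K * ?Q = four_block_mat (mat 1 1 (\<lambda>_. 1 + of_nat n * s / d)) (mat 1 n (\<lambda>_. 1)) (0\<^sub>m n 1) B"
    using B d by (subst mult_four_block_mat) (auto simp: const_mat_mult_const_mat add_const_mat mult_const_mat_right)
  have "det (B + mat n n (\<lambda>_. s)) = det ?K"
    unfolding det_PK[symmetric] PK using B by (subst det_four_block_mat_lower_left_zero[of _ 1 _ n]) auto
  also have "det ?K = (1 + of_nat n * s / d) * det B"
    unfolding det_KQ[symmetric] KQ using B by (subst det_four_block_mat_lower_left_zero[of _ 1 _ n]) (auto simp: det_single)
  finally show ?thesis .
qed

lemma det_four_block_const_mat_schur:
  fixes B1 :: "'a :: field mat"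
  assumes B1: "B1 \<in> carrier_mat n1 n1" and B2: "B2 \<in> carrier_mat n2 n2"
    and d1: "constant_row_sum B1 d1" "d1 \<noteq> 0"
  shows "det (four_block_mat B1 (mat n1 n2 (\<lambda>_. a)) (mat n2 n1 (\<lambda>_. b)) B2)
    = det B1 * det (B2 + mat n2 n2 (\<lambda>_. - (of_nat n1 * a * b / d1)))"
proof -
  let ?N = "four_block_mat B1 (mat n1 n2 (\<lambda>_. a)) (mat n2 n1 (\<lambda>_. b)) B2"
  let ?L = "four_block_mat (1\<^sub>m n1) (mat n1 n2 (\<lambda>_. - (a/d1))) (0\<^sub>m n2 n1) (1\<^sub>m n2)"
  have N: "?N \<in> carrier_mat (n1+n2) (n1+n2)" using B1 B2 by auto
  have L: "?L \<in> carrier_mat (n1+n2) (n1+n2)" by auto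
  have "det ?L = 1"
    by (subst det_four_block_mat_lower_left_zero[of _ n1 _ n2]) auto
  then have det_NL: "det (?N * ?L) = det ?N"
    using det_mult[OF N L] by simp
  have NL: "?N * ?L = four_block_mat B1 (0\<^sub>m n1 n2) (mat n2 n1 (\<lambda>_. b))
      (B2 + mat n2 n2 (\<lambda>_. - (of_nat n1 * a * b / d1)))"
    using B1 B2 d1
    by (subst mult_four_block_mat) (auto simp: const_mat_mult_const_mat add_const_mat mult_const_mat_right)
  show ?thesis
    unfolding det_NL[symmetric] NL using B1 B2
    by (subst det_four_block_mat_upper_right_zero[of _ n1 _ n2]) auto
qed

lemma det_four_block_const_mat:
  fixes B1 :: "'a :: field mat"
  assumes B1: "B1 \<in> carrier_mat n1 n1" and B2: "B2 \<in> carrier_mat n2 n2"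
    and d1: "constant_row_sum B1 d1" "d1 \<noteq> 0" and d2: "constant_row_sum B2 d2" "d2 \<noteq> 0"
  shows "det (four_block_mat B1 (mat n1 n2 (\<lambda>_. a)) (mat n2 n1 (\<lambda>_. b)) B2)
    = det B1 * det B2 * (1 - of_nat n1 * of_nat n2 * a * b / (d1 * d2))"
  using d1 d2 by (simp add: det_four_block_const_mat_schur[OF B1 B2 d1] det_add_const_mat[OF B2 d2])

lemma poly_eqI_cofinite:
  fixes p q :: "'a :: {idom, ring_char_0} poly"
  assumes "finite S" and "\<And>x. x \<notin> S \<Longrightarrow> poly p x = poly q x"
  shows "p = q"
proof (rule ccontr)
  assume "p \<noteq> q"
  then have "finite {x. poly (p - q) x = 0}" by (intro poly_roots_finite) simp
  moreover have "UNIV - S \<subseteq> {x. poly (p - q) x = 0}" using assms(2) by auto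
  ultimately have "finite (UNIV :: 'a set)"
    using assms(1) by (metis finite_Diff2 finite_subset)
  then show False using infinite_UNIV_char_0 by blast
qed

lemma constant_row_sum_neg_char_matrix:
  fixes C :: "'a :: field mat"
  assumes C: "C \<in> carrier_mat n n" and r: "constant_row_sum C r"
  shows "constant_row_sum (- char_matrix C x) (x - r)"
  unfolding constant_row_sum_def
proof (intro allI impI)
  fix i assume "i < dim_row (- char_matrix C x)"
  then have i: "i < n" using C by (simp add: char_matrix_def)
  have "(\<Sum>j<n. (- char_matrix C x) $$ (i,j)) = (\<Sum>j<n. (if i = j then x else 0) - C $$ (i,j))"
    using C i by (intro sum.cong) (auto simp: char_matrix_def)
  also have "\<dots> = x - r"
    using C i r by (simp add: sum_subtractf constant_row_sum_def)
  finally show "(\<Sum>j<dim_col (- char_matrix C x). (- char_matrix C x) $$ (i,j)) = x - r"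
    using C by (simp add: char_matrix_def)
qed

lemma neg_char_matrix_four_block_mat:
  assumes "C1 \<in> carrier_mat n1 n1" "C2 \<in> carrier_mat n2 n2"
  shows "- char_matrix (four_block_mat C1 (mat n1 n2 (\<lambda>_. a)) (mat n2 n1 (\<lambda>_. b)) C2) x
    = four_block_mat (- char_matrix C1 x) (mat n1 n2 (\<lambda>_. - a)) (mat n2 n1 (\<lambda>_. - b)) (- char_matrix C2 x)"
  using assms by (intro eq_matI) (auto simp: char_matrix_def)

lemma char_poly_four_block_const_mat:
  fixes C1 C2 :: "'a :: field_char_0 mat"
  assumes C1: "C1 \<in> carrier_mat n1 n1" and C2: "C2 \<in> carrier_mat n2 n2"
    and r1: "constant_row_sum C1 r1" and r2: "constant_row_sum C2 r2"
  shows "char_poly (four_block_mat C1 (mat n1 n2 (\<lambda>_. a)) (mat n2 n1 (\<lambda>_. b)) C2) * [:-r1, 1:] * [:-r2, 1:]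
    = char_poly C1 * char_poly C2 * [:r1 * r2 - of_nat n1 * of_nat n2 * a * b, -(r1 + r2), 1:]"
proof (rule poly_eqI_cofinite[of "{r1, r2}"])
  fix x assume "x \<notin> {r1, r2}"
  then have d1: "x - r1 \<noteq> 0" and d2: "x - r2 \<noteq> 0" by auto
  let ?M = "four_block_mat C1 (mat n1 n2 (\<lambda>_. a)) (mat n2 n1 (\<lambda>_. b)) C2"
  have M: "?M \<in> carrier_mat (n1 + n2) (n1 + n2)" using C1 C2 by auto
  have D: "(x - r1) * (x - r2) \<noteq> 0" using d1 d2 by simp
  have cpM: "poly (char_poly ?M) x = det (- char_matrix C1 x) * det (- char_matrix C2 x)
      * (1 - of_nat n1 * of_nat n2 * a * b / ((x - r1) * (x - r2)))"
    unfolding char_poly_matrix[OF M] neg_char_matrix_four_block_mat[OF C1 C2]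
    by (subst det_four_block_const_mat[of _ n1 _ n2 "x - r1" "x - r2"])
      (use C1 C2 r1 r2 d1 d2 in \<open>auto intro: constant_row_sum_neg_char_matrix\<close>)
  have "poly (char_poly ?M * [:-r1, 1:] * [:-r2, 1:]) x = poly (char_poly ?M) x * ((x - r1) * (x - r2))"
    by (simp add: algebra_simps)
  also have "\<dots> = det (- char_matrix C1 x) * det (- char_matrix C2 x)
      * ((x - r1) * (x - r2) - of_nat n1 * of_nat n2 * a * b)"
    unfolding cpM using D by (simp add: field_simps)
  also have "\<dots> = poly (char_poly C1 * char_poly C2 * [:r1 * r2 - of_nat n1 * of_nat n2 * a * b, -(r1 + r2), 1:]) x"
    by (simp add: char_poly_matrix[OF C1] char_poly_matrix[OF C2] algebra_simps)
  finally show "poly (char_poly ?M * [:-r1, 1:] * [:-r2, 1:]) x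
    = poly (char_poly C1 * char_poly C2 * [:r1 * r2 - of_nat n1 * of_nat n2 * a * b, -(r1 + r2), 1:]) x" .
qed simp

lemma char_poly_nonzero: "C \<in> carrier_mat n n \<Longrightarrow> char_poly C \<noteq> 0"
  using degree_monic_char_poly[of C n] by auto

definition root_modulus_sum :: "complex poly \<Rightarrow> real" where
  "root_modulus_sum p = (\<Sum>z\<in>#proots p. cmod z)"

lemma root_modulus_sum_mult:
  "p \<noteq> 0 \<Longrightarrow> q \<noteq> 0 \<Longrightarrow> root_modulus_sum (p * q) = root_modulus_sum p + root_modulus_sum q"
  by (simp add: root_modulus_sum_def proots_mult)

lemma root_modulus_sum_linear_factor [simp]: "root_modulus_sum [:- c, 1:] = cmod c"
  by (simp add: root_modulus_sum_def)

lemma abs_add_abs_eq_max: "\<bar>x\<bar> + \<bar>y\<bar> = max \<bar>x + y\<bar> \<bar>x - y :: real\<bar>"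
  by (simp add: abs_if max_def)

lemma root_modulus_sum_real_quadratic:
  fixes c s :: real
  assumes "4 * c \<le> s\<^sup>2"
  shows "root_modulus_sum [:of_real c, - of_real s, 1:] = max \<bar>s\<bar> (sqrt (s\<^sup>2 - 4 * c))"
proof -
  define l1 where "l1 = (s + sqrt (s\<^sup>2 - 4 * c)) / 2"
  define l2 where "l2 = (s - sqrt (s\<^sup>2 - 4 * c)) / 2"
  have "(sqrt (s\<^sup>2 - 4 * c))\<^sup>2 = s\<^sup>2 - 4 * c" using assms by simp
  then have c: "c = l1 * l2" and s: "s = l1 + l2"
    by (simp_all add: l1_def l2_def field_simps power2_eq_square)
  have "[:of_real c, - of_real s, 1:] = [:- of_real l1, 1:] * [:- complex_of_real l2, 1:]"
    unfolding c s by (simp add: algebra_simps)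
  then have "root_modulus_sum [:of_real c, - of_real s, 1:] = \<bar>l1\<bar> + \<bar>l2\<bar>"
    by (simp add: root_modulus_sum_mult del: mult_pCons_left mult_pCons_right)
  also have "\<dots> = max \<bar>s\<bar> (sqrt (s\<^sup>2 - 4 * c))"
    using assms unfolding abs_add_abs_eq_max by (simp add: l1_def l2_def field_simps flip: s)
  finally show ?thesis .
qed

lemma constant_row_sum_map_of_real:
  "constant_row_sum A r \<Longrightarrow> constant_row_sum (map_mat of_real A :: 'a :: real_algebra_1 mat) (of_real r)"
  by (simp add: constant_row_sum_def flip: of_real_sum)

lemma map_of_real_joined_union2:
  assumes "A1 \<in> carrier_mat n1 n1" "A2 \<in> carrier_mat n2 n2"
  shows "map_mat complex_of_real (joined_union2 A A1 A2)
    = four_block_mat (map_mat of_real A1) (mat n1 n2 (\<lambda>_. of_real (A $$ (0,1))))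
        (mat n2 n1 (\<lambda>_. of_real (A $$ (1,0)))) (map_mat of_real A2)"
  using assms by (intro eq_matI) (auto simp: joined_union2_def)

lemma energy_joined_union2:
  fixes A A1 A2 :: "real mat"
  assumes A1: "A1 \<in> carrier_mat n1 n1" "constant_row_sum A1 r1"
    and A2: "A2 \<in> carrier_mat n2 n2" "constant_row_sum A2 r2"
  shows "energy (joined_union2 A A1 A2) + \<bar>r1\<bar> + \<bar>r2\<bar> = energy A1 + energy A2
    + root_modulus_sum [:of_real (r1 * r2 - real n1 * real n2 * (A $$ (0,1) * A $$ (1,0))),
        - of_real (r1 + r2), 1:]"
proof -
  let ?C1 = "map_mat complex_of_real A1" and ?C2 = "map_mat complex_of_real A2"
  let ?M = "map_mat complex_of_real (joined_union2 A A1 A2)"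
  let ?q = "[:of_real (r1 * r2 - real n1 * real n2 * (A $$ (0,1) * A $$ (1,0))), - of_real (r1 + r2), 1:]"
  have C1: "?C1 \<in> carrier_mat n1 n1" and C2: "?C2 \<in> carrier_mat n2 n2" using A1 A2 by auto
  then have M: "?M \<in> carrier_mat (n1 + n2) (n1 + n2)"
    unfolding map_of_real_joined_union2[OF A1(1) A2(1)] by auto
  have "char_poly ?M * [:- of_real r1, 1:] * [:- of_real r2, 1:] = char_poly ?C1 * char_poly ?C2 * ?q"
    unfolding map_of_real_joined_union2[OF A1(1) A2(1)]
    by (subst char_poly_four_block_const_mat[OF C1 C2])
      (use A1 A2 in \<open>auto intro: constant_row_sum_map_of_real simp: algebra_simps\<close>)
  then have "root_modulus_sum (char_poly ?M * [:- of_real r1, 1:] * [:- of_real r2, 1:])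
      = root_modulus_sum (char_poly ?C1 * char_poly ?C2 * ?q)"
    by (rule arg_cong)
  then show ?thesis
    using char_poly_nonzero[OF M] char_poly_nonzero[OF C1] char_poly_nonzero[OF C2]
    by (simp add: root_modulus_sum_mult energy_def del: mult_pCons_left mult_pCons_right
        flip: root_modulus_sum_def)
qed

lemma energy_zero_mat_1: "energy (0\<^sub>m 1 1) = 0"
proof -
  have "char_poly (0\<^sub>m 1 1 :: complex mat) = [:0, 1:]"
    by (subst char_poly_upper_triangular[of _ 1]) (auto simp: upper_triangular_def diag_mat_def)
  moreover have "map_mat complex_of_real (0\<^sub>m 1 1) = 0\<^sub>m 1 1" by auto
  ultimately show ?thesis by (simp add: energy_def)
qed

lemma joined_union2_zero_mat_1:
  assumes "loopless_digraph_adj2 A"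
  shows "joined_union2 A (0\<^sub>m 1 1) (0\<^sub>m 1 1) = A"
proof (rule eq_matI)
  fix i j assume "i < dim_row A" "j < dim_col A"
  then have "i < 2" "j < 2" using assms by (auto simp: loopless_digraph_adj2_def)
  then show "joined_union2 A (0\<^sub>m 1 1) (0\<^sub>m 1 1) $$ (i, j) = A $$ (i, j)"
    using assms by (auto simp: joined_union2_def loopless_digraph_adj2_def less_2_cases_iff)
qed (use assms in \<open>auto simp: joined_union2_def loopless_digraph_adj2_def\<close>)

lemma energy_loopless_digraph_adj2:
  assumes "loopless_digraph_adj2 A"
  shows "energy A = root_modulus_sum [:- of_real (A $$ (0,1) * A $$ (1,0)), 0, 1:]"
  using energy_joined_union2[of "0\<^sub>m 1 1" 1 0 "0\<^sub>m 1 1" 1 0 A]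
  unfolding joined_union2_zero_mat_1[OF assms] energy_zero_mat_1
  by (simp add: constant_row_sum_def)

lemma root_modulus_sum_joined_quadratic_ge:
  fixes r1 r2 t :: real and n1 n2 :: nat
  assumes r1: "0 \<le> r1" "r1 + 1 \<le> real n1" and r2: "0 \<le> r2" "r2 + 1 \<le> real n2" and t: "t \<in> {0, 1}"
  shows "root_modulus_sum [:- of_real t, 0, 1:] + r1 + r2
    \<le> root_modulus_sum [:of_real (r1 * r2 - real n1 * real n2 * t), - of_real (r1 + r2), 1:]"
proof -
  define D where "D = (r1 - r2)\<^sup>2 + 4 * real n1 * real n2 * t"
  have "(r1 + r2)\<^sup>2 - 4 * (r1 * r2 - real n1 * real n2 * t) = D"
    by (simp add: D_def power2_eq_square algebra_simps)
  moreover have "0 \<le> D" using t by (auto simp: D_def)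
  ultimately have q: "root_modulus_sum [:of_real (r1 * r2 - real n1 * real n2 * t), - of_real (r1 + r2), 1:]
      = max (r1 + r2) (sqrt D)"
    using root_modulus_sum_real_quadratic[of "r1 * r2 - real n1 * real n2 * t" "r1 + r2"] r1 r2 by simp
  have "root_modulus_sum [:- of_real t, 0, 1:] = sqrt (4 * t)"
    using root_modulus_sum_real_quadratic[of "- t" 0] t by auto
  also have "\<dots> = 2 * sqrt t" by (simp add: real_sqrt_mult)
  finally have t_sum: "root_modulus_sum [:- of_real t, 0, 1:] = 2 * sqrt t" .
  from t show ?thesis
  proof
    assume "t = 0"
    then show ?thesis unfolding q t_sum by simp
  next
    assume "t \<in> {1}"
    then have "t = 1" by simp
    have "(r1 + 1) * (r2 + 1) \<le> real n1 * real n2" using r1 r2 by (intro mult_mono) auto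
    then have "(r1 + r2 + 2)\<^sup>2 \<le> D" by (simp add: D_def \<open>t = 1\<close> power2_eq_square algebra_simps)
    then have "r1 + r2 + 2 \<le> sqrt D" using r1 r2 real_le_rsqrt by auto
    then show ?thesis unfolding q t_sum by (simp add: \<open>t = 1\<close>)
  qed
qed

lemma simple_graph_adj_row_sum_bounds:
  assumes A: "simple_graph_adj n A" and i: "i < n"
  shows "0 \<le> (\<Sum>j<n. A $$ (i,j))" and "(\<Sum>j<n. A $$ (i,j)) + 1 \<le> real n"
proof -
  have "A $$ (i,j) \<in> {0, 1}" if "j < n" for j
    using A i that unfolding simple_graph_adj_def by blast
  then have entries: "0 \<le> A $$ (i,j) \<and> A $$ (i,j) \<le> 1" if "j < n" for j
    using that by fastforce
  then show "0 \<le> (\<Sum>j<n. A $$ (i,j))" by (intro sum_nonneg) simp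
  have "A $$ (i,i) = 0" using A i unfolding simple_graph_adj_def by blast
  then have "(\<Sum>j<n. A $$ (i,j)) = (\<Sum>j\<in>{..<n} - {i}. A $$ (i,j))"
    using i by (simp add: sum.remove)
  also have "\<dots> \<le> (\<Sum>j\<in>{..<n} - {i}. 1)" using entries by (intro sum_mono) simp
  also have "\<dots> = real n - 1" using i by simp
  finally show "(\<Sum>j<n. A $$ (i,j)) + 1 \<le> real n" by simp
qed

lemma regular_graph_adj_degree:
  assumes "regular_graph_adj n A"
  obtains r where "A \<in> carrier_mat n n" "constant_row_sum A r" "0 \<le> r" "r + 1 \<le> real n"
proof -
  from assms have A: "simple_graph_adj n A" and "\<exists>r. \<forall>i<n. (\<Sum>j<n. A $$ (i,j)) = r"
    unfolding regular_graph_adj_def by auto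
  then obtain r where r: "\<forall>i<n. (\<Sum>j<n. A $$ (i,j)) = r" by blast
  have "A \<in> carrier_mat n n" and "0 < n" using A by (auto simp: simple_graph_adj_def)
  moreover from this r have "constant_row_sum A r" by (simp add: constant_row_sum_def)
  moreover have "0 \<le> r" "r + 1 \<le> real n"
    using simple_graph_adj_row_sum_bounds[OF A \<open>0 < n\<close>] r \<open>0 < n\<close> by auto
  ultimately show ?thesis using that by blast
qed

theorem mainTheorem11:
  fixes A A1 A2 :: "real mat" and n1 n2 :: nat
  assumes "regular_graph_adj n1 A1" and "regular_graph_adj n2 A2"
    and "loopless_digraph_adj2 A"
  shows "energy (joined_union2 A A1 A2) \<ge> energy A + energy A1 + energy A2"
proof -
  obtain r1 where A1: "A1 \<in> carrier_mat n1 n1" "constant_row_sum A1 r1" "0 \<le> r1" "r1 + 1 \<le> real n1"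
    using regular_graph_adj_degree[OF assms(1)] .
  obtain r2 where A2: "A2 \<in> carrier_mat n2 n2" "constant_row_sum A2 r2" "0 \<le> r2" "r2 + 1 \<le> real n2"
    using regular_graph_adj_degree[OF assms(2)] .
  have t: "A $$ (0,1) * A $$ (1,0) \<in> {0, 1}"
    using assms(3) by (auto simp: loopless_digraph_adj2_def)
  have "\<bar>r1\<bar> = r1" "\<bar>r2\<bar> = r2" using A1(3) A2(3) by simp_all
  then show ?thesis
    using energy_joined_union2[OF A1(1,2) A2(1,2), of A] energy_loopless_digraph_adj2[OF assms(3)]
      root_modulus_sum_joined_quadratic_ge[OF A1(3,4) A2(3,4) t]
    by linarith
qed

end
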